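(* Suppose the budget and utility parameters of users are drawn i.i.d. from a distribution $\mathcal{D}$ such that for each good $j$, $\mathbb{P}_{\mathcal{D}}(u_j>0)>0$, and suppose the price vectors of the revealed preference algorithm described below satisfy $\mathbf{p}^t\ge\underline{\mathbf{p}}>\mathbf{0}$ for all users $t\in[n]$. Then, when the step size is $\gamma=\gamma_t=\bar D/\sqrt n$ for some $0<\bar D\le 1$, the price vectors are bounded: $\mathbf{p}^t\le\bar{\mathbf{p}}$ for all $t\in[n]$ for some constant vector $\bar{\mathbf{p}}\ge\underline{\mathbf{p}}$.
   Context: Online Fisher market: $m$ divisible goods, good $j$ with capacity $c_j=nd_j$, $\mathbf{d}>\mathbf{0}$; $n$ users with $(w_t,\mathbf{u}_t)$ i.i.d. from $\mathcal{D}$, budgets $w_t\in[\underline w,\bar w]$ with $\underline w>0$, utilities bounded and nonnegative. Given $\mathbf{p}^t$, user $t$ consumes an optimal solution $\mathbf{x}_t$ of $\max\mathbf{u}_t^\top\mathbf{x}$ s.t. $(\mathbf{p}^t)^\top\mathbf{x}\le w_t$, $\mathbf{x}\ge\mathbf{0}$. Revealed preference algorithm: initialize $\mathbf{p}^1>\mathbf{0}$; $\mathbf{p}^{t+1}=\mathbf{p}^t-\gamma_t(\mathbf{d}-\mathbf{x}_t)$. "Constant" means independent of $n$ and $t$. *)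

theory Defs
  imports "HOL-Probability.Probability"
begin

definition optimal_consumption ::
  "real^'m \<Rightarrow> real \<Rightarrow> real^'m \<Rightarrow> real^'m \<Rightarrow> bool" where
  "optimal_consumption p w u x \<longleftrightarrow>
     (\<forall>j. 0 \<le> x $ j) \<and> p \<bullet> x \<le> w \<and>
     (\<forall>y. (\<forall>j. 0 \<le> y $ j) \<and> p \<bullet> y \<le> w \<longrightarrow> u \<bullet> y \<le> u \<bullet> x)"

end

theory Submission
  imports Defs
begin

text \<open>The price of good \<open>j\<close> rises only when the demand \<open>x\<^sub>j\<close> exceeds \<open>d\<^sub>j\<close>. Since a user
  spends at most \<open>w \<le> w\<^sub>h\<close>, the demand satisfies \<open>x\<^sub>j \<le> w\<^sub>h / p\<^sub>j\<close>: once \<open>p\<^sub>j \<ge> w\<^sub>h / d\<^sub>j\<close>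
  the price cannot increase, and below that threshold one step (with \<open>\<gamma> \<le> 1\<close>) adds at most
  \<open>x\<^sub>j \<le> w\<^sub>h / p\<^sub>j \<le> w\<^sub>h / p\<^sub>l\<^sub>o\<^sub>j\<close>. Hence \<open>p\<^sub>j\<close> never exceeds \<open>max p\<^sub>1\<^sub>j (w\<^sub>h/d\<^sub>j + w\<^sub>h/p\<^sub>l\<^sub>o\<^sub>j)\<close>,
  deterministically on the event that all budgets are at most \<open>w\<^sub>h\<close>.\<close>

lemma component_mult_le_inner:
  fixes p x :: "real^'n"
  assumes "\<forall>i. 0 \<le> p $ i" and "\<forall>i. 0 \<le> x $ i"
  shows "p $ j * x $ j \<le> p \<bullet> x"
proof -
  have "p $ j * x $ j \<le> (\<Sum>i\<in>UNIV. p $ i * x $ i)"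
    by (rule member_le_sum) (use assms in auto)
  then show ?thesis by (simp add: inner_vec_def)
qed

lemma price_update_le:
  fixes q x d l w g :: real
  assumes "0 < l" and "l \<le> q" and "0 \<le> x" and "q * x \<le> w" and "0 < d"
    and "0 \<le> g" and "g \<le> 1"
  shows "q - g * (d - x) \<le> max q (w / d + w / l)"
proof (cases "w / d \<le> q")
  case True
  then have "q * x \<le> q * d" using assms(4,5) by (simp add: divide_le_eq mult.commute)
  then have "x \<le> d" using assms(1,2) by simp
  then have "0 \<le> g * (d - x)" using assms(6) by simp
  then show ?thesis by linarith
next
  case False
  have "l * x \<le> w" using assms(2-4) by (meson mult_right_mono order_trans)
  then have "x \<le> w / l" using assms(1) by (simp add: le_divide_eq mult.commute)
  moreover have "g * x \<le> x" using assms(3,6,7) by (simp add: mult_left_le_one_le)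
  moreover have "0 \<le> g * d" using assms(5,6) by simp
  ultimately show ?thesis using False by (simp add: algebra_simps)
qed

lemma revealed_preference_price_le:
  fixes p x :: "nat \<Rightarrow> real^'m" and w :: "nat \<Rightarrow> real"
  assumes lower: "\<forall>t\<in>{1..n}. \<forall>i. plo $ i \<le> p t $ i" and plo_pos: "\<forall>i. 0 < plo $ i"
    and feasible: "\<forall>t\<in>{1..n}. (\<forall>i. 0 \<le> x t $ i) \<and> p t \<bullet> x t \<le> w t \<and> w t \<le> wh"
    and init: "p 1 = p1"
    and update: "\<forall>t. 1 \<le> t \<and> t < n \<longrightarrow> p (Suc t) = p t - g *\<^sub>R (d - x t)"
    and "0 \<le> g" and "g \<le> 1" and "0 < d $ j"
    and t: "t \<in> {1..n}"
  shows "p t $ j \<le> max (p1 $ j) (wh / d $ j + wh / plo $ j)"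
proof -
  have "1 \<le> t" "t \<le> n" using t by auto
  then show ?thesis
  proof (induction t rule: nat_induct_at_least)
    case base
    then show ?case using init by simp
  next
    case (Suc t)
    then have t: "t \<in> {1..n}" by simp
    have "\<forall>i. 0 \<le> p t $ i" using lower plo_pos t by (meson less_le_trans less_imp_le)
    then have "p t $ j * x t $ j \<le> wh"
      using component_mult_le_inner[of "p t" "x t" j] feasible t by fastforce
    then have "p t $ j - g * (d $ j - x t $ j) \<le> max (p t $ j) (wh / d $ j + wh / plo $ j)"
      using price_update_le[of "plo $ j" "p t $ j" "x t $ j" wh "d $ j" g]
        lower plo_pos feasible t assms(6-8) by simp
    moreover have "p (Suc t) $ j = p t $ j - g * (d $ j - x t $ j)"
      using update Suc.hyps Suc.prems by simp
    ultimately show ?case using Suc by simp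
  qed
qed

lemma AE_all_identically_distributed:
  assumes "finite I"
    and "\<forall>t\<in>I. Z t \<in> measurable M D \<and> distr M D (Z t) = D"
    and "AE z in D. P z"
  shows "AE \<omega> in M. \<forall>t\<in>I. P (Z t \<omega>)"
proof (rule AE_finite_allI[OF assms(1)])
  fix t assume "t \<in> I"
  then show "AE \<omega> in M. P (Z t \<omega>)"
    using assms(2,3) by (metis AE_distrD)
qed

lemma step_size_le_one:
  assumes "0 < Dbar" and "Dbar \<le> 1" and "1 \<le> n"
  shows "0 \<le> Dbar / sqrt (real n)" and "Dbar / sqrt (real n) \<le> 1"
proof -
  show "0 \<le> Dbar / sqrt (real n)" using assms(1) by simp
  have "1 \<le> sqrt (real n)" using assms(3) by simp
  then show "Dbar / sqrt (real n) \<le> 1"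
    using assms(1,2) by (simp add: divide_le_eq del: real_sqrt_ge_1_iff)
qed

theorem lemma9:
  fixes D :: "(real \<times> (real^'m)) measure"
    and d p1 plo :: "real^'m"
    and wl wh ubar Dbar :: real
  assumes "prob_space D" and "sets D = sets borel"
    and "0 < wl" and "wl \<le> wh"
    and "AE z in D. wl \<le> fst z \<and> fst z \<le> wh \<and>
                    (\<forall>j. 0 \<le> snd z $ j \<and> snd z $ j \<le> ubar)"
    and "\<forall>j. measure D {z \<in> space D. 0 < snd z $ j} > 0"
    and "\<forall>j. 0 < d $ j" and "\<forall>j. 0 < p1 $ j" and "\<forall>j. 0 < plo $ j"
    and "0 < Dbar" and "Dbar \<le> 1"
  shows "\<exists>pbar :: real^'m. (\<forall>j. plo $ j \<le> pbar $ j) \<and>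
    (\<forall>(n::nat) (M :: 'w measure) (Z :: nat \<Rightarrow> 'w \<Rightarrow> real \<times> (real^'m))
        (x :: nat \<Rightarrow> 'w \<Rightarrow> real^'m) (p :: nat \<Rightarrow> 'w \<Rightarrow> real^'m).
       prob_space M \<and>
       (\<forall>t\<in>{1..n}. Z t \<in> measurable M D \<and> distr M D (Z t) = D) \<and>
       prob_space.indep_vars M (\<lambda>_. D) Z {1..n} \<and>
       (\<forall>\<omega>. p 1 \<omega> = p1) \<and>
       (\<forall>\<omega> t. 1 \<le> t \<and> t < n \<longrightarrow>
          p (Suc t) \<omega> = p t \<omega> - (Dbar / sqrt (real n)) *\<^sub>R (d - x t \<omega>))
       \<longrightarrow>
       (AE \<omega> in M.
          (\<forall>t\<in>{1..n}. (\<forall>j. plo $ j \<le> p t \<omega> $ j) \<and>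
             optimal_consumption (p t \<omega>) (fst (Z t \<omega>)) (snd (Z t \<omega>)) (x t \<omega>))
          \<longrightarrow> (\<forall>t\<in>{1..n}. \<forall>j. p t \<omega> $ j \<le> pbar $ j)))"
proof -
  define pbar :: "real^'m" where
    "pbar = (\<chi> j. max (plo $ j) (max (p1 $ j) (wh / d $ j + wh / plo $ j)))"
  show ?thesis
  proof (intro exI[of _ pbar] conjI allI impI)
    fix n :: nat and M :: "'w measure" and Z :: "nat \<Rightarrow> 'w \<Rightarrow> real \<times> (real^'m)"
      and x p :: "nat \<Rightarrow> 'w \<Rightarrow> real^'m"
    assume H: "prob_space M \<and>
         (\<forall>t\<in>{1..n}. Z t \<in> measurable M D \<and> distr M D (Z t) = D) \<and>
         prob_space.indep_vars M (\<lambda>_. D) Z {1..n} \<and>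
         (\<forall>\<omega>. p 1 \<omega> = p1) \<and>
         (\<forall>\<omega> t. 1 \<le> t \<and> t < n \<longrightarrow>
            p (Suc t) \<omega> = p t \<omega> - (Dbar / sqrt (real n)) *\<^sub>R (d - x t \<omega>))"
    have "AE z in D. fst z \<le> wh" using assms(5) by (auto elim: AE_mp)
    then have "AE \<omega> in M. \<forall>t\<in>{1..n}. fst (Z t \<omega>) \<le> wh"
      using H by (intro AE_all_identically_distributed) auto
    then show "AE \<omega> in M.
        (\<forall>t\<in>{1..n}. (\<forall>j. plo $ j \<le> p t \<omega> $ j) \<and>
           optimal_consumption (p t \<omega>) (fst (Z t \<omega>)) (snd (Z t \<omega>)) (x t \<omega>))
        \<longrightarrow> (\<forall>t\<in>{1..n}. \<forall>j. p t \<omega> $ j \<le> pbar $ j)"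
    proof (rule AE_mp, intro AE_I2 impI ballI allI)
      fix \<omega> t j
      assume "\<forall>t\<in>{1..n}. fst (Z t \<omega>) \<le> wh"
        and "\<forall>t\<in>{1..n}. (\<forall>j. plo $ j \<le> p t \<omega> $ j) \<and>
               optimal_consumption (p t \<omega>) (fst (Z t \<omega>)) (snd (Z t \<omega>)) (x t \<omega>)"
        and t: "t \<in> {1..n}"
      moreover have "0 \<le> Dbar / sqrt (real n)" "Dbar / sqrt (real n) \<le> 1"
        using step_size_le_one assms(10,11) t by auto
      ultimately have "p t \<omega> $ j \<le> max (p1 $ j) (wh / d $ j + wh / plo $ j)"
        using H assms(7,9) unfolding optimal_consumption_def
        by (intro revealed_preference_price_le[where x="\<lambda>t. x t \<omega>" and w="\<lambda>t. fst (Z t \<omega>)"])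
          auto
      then show "p t \<omega> $ j \<le> pbar $ j" by (simp add: pbar_def)
    qed
  qed (simp add: pbar_def)
qed

end
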